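(* Let $y$ be a string over an alphabet $\Sigma$ whose last character occurs nowhere else in $y$. For any backward edge $((x,x^R),\alpha^R,(\alpha x, x^R\alpha^R))$ of the affix tree $\mathrm{ATree}(y)$ (with $\alpha\in\Sigma^+$), we have: $x\in\mathcal{L}$ and $\alpha x\notin\mathcal{L}$ if and only if $(x,a,ax)$ is an implicit modified Weiner link of $\mathrm{ST}(y)$, where $a=\alpha[|\alpha|]$ is the last character of $\alpha$.
   Context: $\mathrm{Substr}(y)$ is the set of substrings of $y$; $x^R$ is the reversal of $x$. $\mathrm{BegPos}(x)=\{i\mid y[i..i+|x|-1]=x\}$, $\mathrm{EndPos}(x)=\{i\mid y[i-|x|+1..i]=x\}$. For $x\in\mathrm{Substr}(y)$, $\overrightarrow{x}$ is the longest string $z$ with $\mathrm{BegPos}(z)=\mathrm{BegPos}(x)$ and $\overleftarrow{x}$ is the longest string $z$ with $\mathrm{EndPos}(z)=\mathrm{EndPos}(x)$. $\mathcal{L}=\{\overrightarrow{x}\mid x\in\mathrm{Substr}(y)\}$, $\mathcal{R}=\{\overleftarrow{x}\mid x\in\mathrm{Substr}(y)\}$. The suffix tree $\mathrm{ST}(y)$ has node set $\mathcal{L}$. The set of modified Weiner links of $\mathrm{ST}(y)$ is $\{(x,a,ax)\mid a\in\Sigma, x\in\mathcal{L}, ax\in\mathrm{Substr}(y)\}$; such a link is explicit if $ax\in\mathcal{L}$ and implicit otherwise. $\mathrm{ATree}(y)$ has node set $V_A=\{(x,x^R)\mid x\in\mathcal{L}\cup\mathcal{R}\}$ and backward edge set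 $\{((x,x^R),\alpha^R,(\alpha x, x^R\alpha^R))\mid x^R, x^R\alpha^R\in\{z^R : z\in\mathcal{L}\cup\mathcal{R}\}, \alpha\in\Sigma^+, x^R\alpha^R[1..i]\notin\{z^R : z\in\mathcal{L}\cup\mathcal{R}\}\ \text{for all }1\le i<|\alpha|\}$. *)

theory Defs
  imports Main
begin

text \<open>Strings are lists over an arbitrary alphabet type 'a. Positions are 0-indexed.\<close>

definition Substr :: "'a list \<Rightarrow> 'a list set" where
  "Substr y = {x. \<exists>u v. y = u @ x @ v}"

definition BegPos :: "'a list \<Rightarrow> 'a list \<Rightarrow> nat set" where
  "BegPos y x = {i. i + length x \<le> length y \<and> take (length x) (drop i y) = x}"

text \<open>End position i (0-indexed, inclusive end): x = y[i-|x|+1..i]; we record i+1.\<close>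
definition EndPos :: "'a list \<Rightarrow> 'a list \<Rightarrow> nat set" where
  "EndPos y x = {j. length x \<le> j \<and> j \<le> length y \<and> take (length x) (drop (j - length x) y) = x}"

definition rext :: "'a list \<Rightarrow> 'a list \<Rightarrow> 'a list" where
  "rext y x = (THE z. BegPos y z = BegPos y x \<and>
      (\<forall>z'. BegPos y z' = BegPos y x \<longrightarrow> length z' \<le> length z))"

definition lext :: "'a list \<Rightarrow> 'a list \<Rightarrow> 'a list" where
  "lext y x = (THE z. EndPos y z = EndPos y x \<and>
      (\<forall>z'. EndPos y z' = EndPos y x \<longrightarrow> length z' \<le> length z))"

definition Lset :: "'a list \<Rightarrow> 'a list set" where
  "Lset y = {rext y x | x. x \<in> Substr y}"

definition Rset :: "'a list \<Rightarrow> 'a list set" where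
  "Rset y = {lext y x | x. x \<in> Substr y}"

definition mod_weiner_links :: "'a list \<Rightarrow> ('a list \<times> 'a \<times> 'a list) set" where
  "mod_weiner_links y = {(x, a, a # x) | x a. x \<in> Lset y \<and> a # x \<in> Substr y}"

definition implicit_mwl :: "'a list \<Rightarrow> 'a list \<Rightarrow> 'a \<Rightarrow> bool" where
  "implicit_mwl y x a \<longleftrightarrow> (x, a, a # x) \<in> mod_weiner_links y \<and> a # x \<notin> Lset y"

definition RevNodes :: "'a list \<Rightarrow> 'a list set" where
  "RevNodes y = {rev z | z. z \<in> Lset y \<union> Rset y}"

definition ATree_nodes :: "'a list \<Rightarrow> ('a list \<times> 'a list) set" where
  "ATree_nodes y = {(x, rev x) | x. x \<in> Lset y \<union> Rset y}"

definition ATree_backward_edges ::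
  "'a list \<Rightarrow> (('a list \<times> 'a list) \<times> 'a list \<times> ('a list \<times> 'a list)) set" where
  "ATree_backward_edges y =
     {((x, rev x), rev \<alpha>, (\<alpha> @ x, rev x @ rev \<alpha>)) | x \<alpha>.
        rev x \<in> RevNodes y \<and> rev x @ rev \<alpha> \<in> RevNodes y \<and> \<alpha> \<noteq> [] \<and>
        (\<forall>i. 1 \<le> i \<and> i < length \<alpha> \<longrightarrow> rev x @ take i (rev \<alpha>) \<notin> RevNodes y)}"

end

theory Submission
  imports Defs
begin

text \<open>Only two properties of the affix tree are used. First, \<open>\<L>\<close> is closed under
  suffixes: if a string \<open>z\<close> longer than \<open>v\<close> had the same begin positions as \<open>v\<close>, then
  \<open>u z\<close> would have the same begin positions as \<open>u v\<close>, so \<open>u v\<close> would not be the longest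
  string with its begin positions. Second, by minimality of a backward edge, for \<open>|\<alpha>| \<ge> 2\<close>
  the string \<open>a x\<close>, a proper suffix of \<open>\<alpha> x\<close>, is not a node at all. Hence
  \<open>a x \<notin> \<L>\<close> iff \<open>\<alpha> x \<notin> \<L>\<close>.\<close>

lemma Substr_appendD:
  assumes "u @ v \<in> Substr y"
  shows "u \<in> Substr y" and "v \<in> Substr y"
proof -
  obtain p q where "y = p @ (u @ v) @ q"
    using assms unfolding Substr_def by blast
  then have u: "y = p @ u @ (v @ q)" and v: "y = (p @ u) @ v @ q"
    by simp_all
  show "u \<in> Substr y"
    unfolding Substr_def mem_Collect_eq by (intro exI) (rule u)
  show "v \<in> Substr y"
    unfolding Substr_def mem_Collect_eq by (intro exI) (rule v)
qed

lemma BegPos_nonempty: "x \<in> Substr y \<Longrightarrow> BegPos y x \<noteq> {}"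
proof -
  assume "x \<in> Substr y"
  then obtain u v where "y = u @ x @ v" unfolding Substr_def by blast
  then have "length u \<in> BegPos y x" unfolding BegPos_def by simp
  then show ?thesis by blast
qed

lemma Substr_if_BegPos:
  assumes "i \<in> BegPos y z"
  shows "z \<in> Substr y"
proof -
  have "take (length z) (drop i y) = z"
    using assms unfolding BegPos_def by simp
  then have "y = take i y @ z @ drop (length z) (drop i y)"
    by (metis append_take_drop_id)
  then show ?thesis
    unfolding Substr_def mem_Collect_eq by (intro exI)
qed

lemma BegPos_length: "i \<in> BegPos y z \<Longrightarrow> length z \<le> length y"
  unfolding BegPos_def by simp

lemma BegPos_eq_if_same_length:
  assumes "i \<in> BegPos y z1" and "i \<in> BegPos y z2" and "length z1 = length z2"
  shows "z1 = z2"
proof -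
  have "take (length z1) (drop i y) = z1" "take (length z2) (drop i y) = z2"
    using assms(1,2) unfolding BegPos_def by simp_all
  then show ?thesis using assms(3) by argo
qed

lemma BegPos_append:
  "j \<in> BegPos y (u @ v) \<longleftrightarrow> j \<in> BegPos y u \<and> j + length u \<in> BegPos y v"
  unfolding BegPos_def by (auto simp: take_add add.commute)

lemma EndPos_nonempty: "x \<in> Substr y \<Longrightarrow> EndPos y x \<noteq> {}"
proof -
  assume "x \<in> Substr y"
  then obtain u v where "y = u @ x @ v" unfolding Substr_def by blast
  then have "length u + length x \<in> EndPos y x" unfolding EndPos_def by simp
  then show ?thesis by blast
qed

lemma Substr_if_EndPos:
  assumes "j \<in> EndPos y z"
  shows "z \<in> Substr y"
proof -
  have "take (length z) (drop (j - length z) y) = z"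
    using assms unfolding EndPos_def by simp
  then have "y = take (j - length z) y @ z @ drop (length z) (drop (j - length z) y)"
    by (metis append_take_drop_id)
  then show ?thesis
    unfolding Substr_def mem_Collect_eq by (intro exI)
qed

lemma EndPos_length: "j \<in> EndPos y z \<Longrightarrow> length z \<le> length y"
  unfolding EndPos_def by simp

lemma EndPos_eq_if_same_length:
  assumes "j \<in> EndPos y z1" and "j \<in> EndPos y z2" and "length z1 = length z2"
  shows "z1 = z2"
proof -
  have "take (length z1) (drop (j - length z1) y) = z1"
    and "take (length z2) (drop (j - length z2) y) = z2"
    using assms(1,2) unfolding EndPos_def by simp_all
  then show ?thesis using assms(3) by argo
qed

lemma longest_such_that:
  assumes bounded: "\<And>z. P z \<Longrightarrow> length z \<le> N"
    and length_inj: "\<And>z1 z2. P z1 \<Longrightarrow> P z2 \<Longrightarrow> length z1 = length z2 \<Longrightarrow> z1 = z2"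
    and "P w"
  defines "m \<equiv> THE z. P z \<and> (\<forall>z'. P z' \<longrightarrow> length z' \<le> length z)"
  shows "P m" and "\<And>z. P z \<Longrightarrow> length z \<le> length m"
proof -
  obtain l where l: "P l" "\<forall>z. P z \<longrightarrow> length z \<le> length l"
    using ex_has_greatest_nat[of P w length "Suc N"] \<open>P w\<close> bounded
    by (metis le_imp_less_Suc)
  have "\<exists>!z. P z \<and> (\<forall>z'. P z' \<longrightarrow> length z' \<le> length z)"
    using l length_inj by (metis le_antisym)
  then have "P m \<and> (\<forall>z'. P z' \<longrightarrow> length z' \<le> length m)"
    unfolding m_def by (rule theI')
  then show "P m" and "\<And>z. P z \<Longrightarrow> length z \<le> length m"
    by blast+
qed

lemma rext_BegPos_longest:
  assumes "x \<in> Substr y"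
  shows "BegPos y (rext y x) = BegPos y x"
    and "\<And>z. BegPos y z = BegPos y x \<Longrightarrow> length z \<le> length (rext y x)"
proof -
  obtain i where i: "i \<in> BegPos y x" using BegPos_nonempty[OF assms] by blast
  have "length z \<le> length y" if "BegPos y z = BegPos y x" for z
    using BegPos_length i that by blast
  moreover have "z1 = z2"
    if "BegPos y z1 = BegPos y x" "BegPos y z2 = BegPos y x" "length z1 = length z2" for z1 z2
    using BegPos_eq_if_same_length[of i y z1 z2] i that by simp
  ultimately show "BegPos y (rext y x) = BegPos y x"
    and "\<And>z. BegPos y z = BegPos y x \<Longrightarrow> length z \<le> length (rext y x)"
    unfolding rext_def by (rule longest_such_that[where P = "\<lambda>z. BegPos y z = BegPos y x"]; simp)+
qed

lemma lext_EndPos: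
  assumes "x \<in> Substr y"
  shows "EndPos y (lext y x) = EndPos y x"
proof -
  obtain j where j: "j \<in> EndPos y x" using EndPos_nonempty[OF assms] by blast
  have "length z \<le> length y" if "EndPos y z = EndPos y x" for z
    using EndPos_length j that by blast
  moreover have "z1 = z2"
    if "EndPos y z1 = EndPos y x" "EndPos y z2 = EndPos y x" "length z1 = length z2" for z1 z2
    using EndPos_eq_if_same_length[of j y z1 z2] j that by simp
  ultimately show ?thesis
    unfolding lext_def by (rule longest_such_that[where P = "\<lambda>z. EndPos y z = EndPos y x"]; simp)
qed

lemma Lset_iff:
  "w \<in> Lset y \<longleftrightarrow> w \<in> Substr y \<and> (\<forall>z. BegPos y z = BegPos y w \<longrightarrow> length z \<le> length w)"
proof
  assume "w \<in> Lset y"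
  then obtain x where x: "x \<in> Substr y" and w: "w = rext y x"
    unfolding Lset_def by blast
  have same: "BegPos y w = BegPos y x"
    using rext_BegPos_longest(1)[OF x] w by simp
  then obtain i where "i \<in> BegPos y w"
    using BegPos_nonempty[OF x] by blast
  then have "w \<in> Substr y"
    by (rule Substr_if_BegPos)
  moreover have "length z \<le> length w" if "BegPos y z = BegPos y w" for z
    using rext_BegPos_longest(2)[OF x] that same w by simp
  ultimately show "w \<in> Substr y \<and> (\<forall>z. BegPos y z = BegPos y w \<longrightarrow> length z \<le> length w)"
    by blast
next
  assume w: "w \<in> Substr y \<and> (\<forall>z. BegPos y z = BegPos y w \<longrightarrow> length z \<le> length w)"
  then have same: "BegPos y (rext y w) = BegPos y w"
    and "length w \<le> length (rext y w)"
    using rext_BegPos_longest[of w y] by simp_all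
  moreover have "length (rext y w) \<le> length w"
    using w same by blast
  moreover obtain i where "i \<in> BegPos y w"
    using BegPos_nonempty w by blast
  ultimately have "w = rext y w"
    using BegPos_eq_if_same_length[of i y "rext y w" w] by simp
  then show "w \<in> Lset y"
    unfolding Lset_def using w by blast
qed

lemma Rset_subset_Substr: "Rset y \<subseteq> Substr y"
proof
  fix z assume "z \<in> Rset y"
  then obtain x where x: "x \<in> Substr y" and z: "z = lext y x"
    unfolding Rset_def by blast
  obtain j where "j \<in> EndPos y x"
    using EndPos_nonempty[OF x] by blast
  then have "j \<in> EndPos y z"
    using lext_EndPos[OF x] z by simp
  then show "z \<in> Substr y"
    by (rule Substr_if_EndPos)
qed

lemma Lset_suffix_closed:
  assumes "u @ v \<in> Lset y"
  shows "v \<in> Lset y"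
  unfolding Lset_iff
proof (intro conjI allI impI)
  have uv: "u @ v \<in> Substr y" "\<forall>z. BegPos y z = BegPos y (u @ v) \<longrightarrow> length z \<le> length (u @ v)"
    using assms Lset_iff by blast+
  then show "v \<in> Substr y" using Substr_appendD by blast
  fix z assume "BegPos y z = BegPos y v"
  then have "BegPos y (u @ z) = BegPos y (u @ v)"
    unfolding set_eq_iff BegPos_append by simp
  then have "length (u @ z) \<le> length (u @ v)"
    using uv(2) by blast
  then show "length z \<le> length v"
    by simp
qed

lemma rev_in_RevNodes_iff: "rev w \<in> RevNodes y \<longleftrightarrow> w \<in> Lset y \<union> Rset y"
  unfolding RevNodes_def by auto

lemma backward_edge_target_node:
  assumes "((x, rev x), rev \<alpha>, (\<alpha> @ x, rev x @ rev \<alpha>)) \<in> ATree_backward_edges y"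
  shows "\<alpha> @ x \<in> Lset y \<union> Rset y"
  using assms rev_in_RevNodes_iff[of "\<alpha> @ x" y] unfolding ATree_backward_edges_def by auto

lemma backward_edge_proper_suffix_not_node:
  assumes "((x, rev x), rev \<alpha>, (\<alpha> @ x, rev x @ rev \<alpha>)) \<in> ATree_backward_edges y"
    and "\<alpha> = \<beta> @ \<gamma>" and "\<beta> \<noteq> []" and "\<gamma> \<noteq> []"
  shows "\<gamma> @ x \<notin> Lset y \<union> Rset y"
proof -
  have "\<forall>i. 1 \<le> i \<and> i < length \<alpha> \<longrightarrow> rev x @ take i (rev \<alpha>) \<notin> RevNodes y"
    using assms(1) unfolding ATree_backward_edges_def by auto
  moreover have "1 \<le> length \<gamma>" and "length \<gamma> < length \<alpha>"
    using assms(2-4) by (simp_all add: Suc_le_eq)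
  ultimately have "rev x @ take (length \<gamma>) (rev \<alpha>) \<notin> RevNodes y"
    by blast
  moreover have "rev x @ take (length \<gamma>) (rev \<alpha>) = rev (\<gamma> @ x)"
    using assms(2) by simp
  ultimately show ?thesis
    using rev_in_RevNodes_iff by metis
qed

lemma implicit_mwl_iff:
  "implicit_mwl y x a \<longleftrightarrow> x \<in> Lset y \<and> a # x \<in> Substr y \<and> a # x \<notin> Lset y"
  unfolding implicit_mwl_def mod_weiner_links_def by blast

theorem theorem7:
  fixes y :: "'a list" and x \<alpha> :: "'a list"
  assumes "y \<noteq> []" and "last y \<notin> set (butlast y)"
    and "((x, rev x), rev \<alpha>, (\<alpha> @ x, rev x @ rev \<alpha>)) \<in> ATree_backward_edges y"
    and "\<alpha> \<noteq> []"
  shows "(x \<in> Lset y \<and> \<alpha> @ x \<notin> Lset y) \<longleftrightarrow> implicit_mwl y x (last \<alpha>)"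
proof -
  define a where "a = last \<alpha>"
  obtain \<beta> where \<alpha>: "\<alpha> = \<beta> @ [a]"
    using \<open>\<alpha> \<noteq> []\<close> unfolding a_def by (metis append_butlast_last_id)
  have "\<alpha> @ x \<in> Substr y"
    using backward_edge_target_node[OF assms(3)] Lset_iff Rset_subset_Substr by blast
  then have "a # x \<in> Substr y"
    using \<alpha> Substr_appendD[of \<beta> "a # x"] by simp
  moreover have "a # x \<notin> Lset y" if "\<alpha> @ x \<notin> Lset y"
  proof (cases "\<beta> = []")
    case True
    then show ?thesis using that \<alpha> by simp
  next
    case False
    then show ?thesis
      using backward_edge_proper_suffix_not_node[OF assms(3) \<alpha> False] by simp
  qed
  moreover have "\<alpha> @ x \<notin> Lset y" if "a # x \<notin> Lset y"
    using that \<alpha> Lset_suffix_closed[of \<beta> "a # x" y] by auto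
  ultimately show ?thesis
    unfolding implicit_mwl_iff a_def[symmetric] by blast
qed

end
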